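(* Let $\{a_n\}_{n\in\mathbb Z}$ be i.i.d. random variables with values in $\{1,2,\dots\}$ with $\mathbb E[a_0]<\infty$ and $\mathbb P[a_0=1]>0$. Let $f(n)=n+a_n$ and let $T^f$ be the directed graph with vertex set $\mathbb Z$ and edge set $\{(n,f(n)):n\in\mathbb Z\}$. Then almost surely $T^f$ has only one connected component, i.e. for every $n\in\mathbb Z$ the set $C(n)=\{m\in\mathbb Z:\exists\, i,j\ge 0 \text{ with } f^i(n)=f^j(m)\}$ equals $\mathbb Z$.
   Context: $f^i$ denotes the $i$-th iterate of $f$, with $f^0$ the identity. *)

theory Defs
  imports "HOL-Probability.Probability"
begin

definition jump_map :: "(int \<Rightarrow> nat) \<Rightarrow> int \<Rightarrow> int" where
  "jump_map a n = n + int (a n)"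

definition comp_of :: "(int \<Rightarrow> int) \<Rightarrow> int \<Rightarrow> int set" where
  "comp_of f n = {m. \<exists>i j. (f ^^ i) n = (f ^^ j) m}"

end

theory Submission
  imports Defs
begin

text \<open>
  Call c a cut point above x0 if no jump from a site in [x0, c) lands beyond c. Jumps are
  positive, so the orbit of every site in [x0, c] then passes through c; hence it suffices
  to show that almost surely every x0 has cut points above it arbitrarily far to the right.

  Since E a_0 is the sum of the tails P(a_0 > i), there is N with tail sum beyond N below 1/2.
  No jump from a block of L >= N sites ending at e passes e with probability
  prod_{i=1..L} P(a_0 <= i) >= P(a_0 = 1)^N / 2 = q > 0. By independence, all of K disjoint
  blocks fail with probability at most (1 - q)^K, while some jump from [x0, e - L) passes e
  with probability at most the tail sum beyond L. Choosing K and then L large makes the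
  probability that no cut point exists above m arbitrarily small.
\<close>

definition no_overshoot :: "(int \<Rightarrow> nat) \<Rightarrow> int set \<Rightarrow> int \<Rightarrow> bool" where
  "no_overshoot b A c \<longleftrightarrow> (\<forall>j\<in>A. j + int (b j) \<le> c)"

lemma no_overshoot_split:
  "x0 \<le> y \<Longrightarrow> y \<le> c \<Longrightarrow>
    no_overshoot b {x0..<c} c \<longleftrightarrow> no_overshoot b {x0..<y} c \<and> no_overshoot b {y..<c} c"
  by (auto simp: no_overshoot_def)

lemma funpow_jump_map_reaches:
  assumes pos: "\<And>k. 1 \<le> b k" and cut: "no_overshoot b {x0..<c} c"
    and "x0 \<le> x" "x \<le> c"
  shows "\<exists>i. (jump_map b ^^ i) x = c"
  using assms(3,4)
proof (induction "nat (c - x)" arbitrary: x rule: less_induct)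
  case less
  show ?case
  proof (cases "x = c")
    case True
    then show ?thesis by (intro exI[of _ 0]) simp
  next
    case False
    have "x + int (b x) \<le> c" "1 \<le> b x"
      using cut less.prems False pos by (auto simp: no_overshoot_def)
    then have "x < jump_map b x" "jump_map b x \<le> c"
      by (simp_all add: jump_map_def)
    then obtain i where "(jump_map b ^^ i) (jump_map b x) = c"
      using less.hyps less.prems by force
    then have "(jump_map b ^^ Suc i) x = c"
      by (simp only: funpow_Suc_right o_apply)
    then show ?thesis by blast
  qed
qed

lemma comp_of_jump_map_eq_UNIV:
  assumes "\<And>k. 1 \<le> b k"
    and "\<And>x0 m. x0 \<le> m \<Longrightarrow> \<exists>c\<ge>m. no_overshoot b {x0..<c} c"
  shows "comp_of (jump_map b) n = UNIV"
proof (intro set_eqI iffI)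
  fix m
  have "min n m \<le> max n m" by simp
  then obtain c where "max n m \<le> c" "no_overshoot b {min n m..<c} c"
    using assms(2) by blast
  then have "\<exists>i. (jump_map b ^^ i) x = c" if "x \<in> {n, m}" for x
    using funpow_jump_map_reaches[of b "min n m" c x] assms(1) that by auto
  then obtain i j where "(jump_map b ^^ i) n = c" "(jump_map b ^^ j) m = c"
    by blast
  then show "m \<in> comp_of (jump_map b) n"
    unfolding comp_of_def by (metis (mono_tags) mem_Collect_eq)
qed simp

lemma sum_reflect_int_interval:
  "x0 \<le> c - int L \<Longrightarrow>
    (\<Sum>j\<in>{x0..<c - int L}. g (nat (c - j))) = (\<Sum>i\<in>{L<..nat (c - x0)}. (g i :: real))"
  by (rule sum.reindex_bij_witness[where i="\<lambda>i. c - int i" and j="\<lambda>j. nat (c - j)"]) auto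

lemma prod_reflect_int_interval:
  "(\<Prod>j\<in>{c - int L..<c}. g (nat (c - j))) = (\<Prod>i\<in>{1..L}. (g i :: real))"
  by (rule prod.reindex_bij_witness[where i="\<lambda>i. c - int i" and j="\<lambda>j. nat (c - j)"]) auto

lemma summable_tail_sums_small:
  fixes t :: "nat \<Rightarrow> real"
  assumes "summable t" "0 < e"
  obtains N where "\<And>n m. N \<le> n \<Longrightarrow> sum t {n<..m} < e"
proof -
  obtain N where N: "\<And>n m. N \<le> n \<Longrightarrow> norm (sum t {n..<m}) < e"
    using assms unfolding summable_Cauchy by blast
  have "sum t {n<..m} < e" if "N \<le> n" for n m
  proof -
    have "{n<..m} = {Suc n..<Suc m}" by auto
    then show ?thesis using N[of "Suc n" "Suc m"] that by simp
  qed
  then show thesis by (rule that)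
qed

lemma add_int_le_iff_le_nat: "j \<le> c \<Longrightarrow> j + int n \<le> c \<longleftrightarrow> n \<le> nat (c - j)"
  by auto

lemma disjoint_family_on_consecutive_blocks:
  "disjoint_family_on (\<lambda>k::nat. {m + int k * int L - int L..<m + int k * int L}) S"
proof (unfold disjoint_family_on_def, intro ballI impI)
  fix k k' :: nat assume "k \<noteq> k'"
  have before: "int k * int L + int L \<le> int k' * int L" if "k < k'" for k k' :: nat
  proof -
    have "(int k + 1) * int L \<le> int k' * int L"
      using that by (intro mult_right_mono) auto
    then show ?thesis by (simp add: distrib_right)
  qed
  show "{m + int k * int L - int L..<m + int k * int L}
      \<inter> {m + int k' * int L - int L..<m + int k' * int L} = {}"
    using before[of k k'] before[of k' k] \<open>k \<noteq> k'\<close> by (cases "k < k'") auto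
qed

locale iid_jumps = prob_space M for M :: "'a measure" +
  fixes a :: "int \<Rightarrow> 'a \<Rightarrow> nat"
  assumes rv[measurable]: "\<And>n. a n \<in> measurable M (count_space UNIV)"
    and indep: "indep_vars (\<lambda>_. count_space UNIV) a UNIV"
    and ident: "\<And>n. distr M (count_space UNIV) (a n) = distr M (count_space UNIV) (a 0)"
    and integ: "integrable M (\<lambda>\<omega>. real (a 0 \<omega>))"
    and one: "prob {\<omega> \<in> space M. a 0 \<omega> = 1} > 0"
begin

lemma pred_jump[measurable]: "Measurable.pred M (\<lambda>\<omega>. P (a j \<omega>))"
  by (rule measurable_compose[OF rv]) simp

lemma prob_jump_in: "prob {\<omega> \<in> space M. a j \<omega> \<in> A} = prob {\<omega> \<in> space M. a 0 \<omega> \<in> A}"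
proof -
  have "measure (distr M (count_space UNIV) (a j)) A = measure (distr M (count_space UNIV) (a 0)) A"
    using ident[of j] by (rule arg_cong)
  then show ?thesis by (simp add: measure_distr vimage_def Int_def conj_commute)
qed

definition tail_prob :: "nat \<Rightarrow> real" where
  "tail_prob i = prob {\<omega> \<in> space M. i < a 0 \<omega>}"

lemma tail_prob_nonneg: "0 \<le> tail_prob i"
  by (simp add: tail_prob_def)

lemma tail_prob_le_1: "tail_prob i \<le> 1"
  by (simp add: tail_prob_def)

lemma prob_jump_gt: "prob {\<omega> \<in> space M. s < a j \<omega>} = tail_prob s"
  using prob_jump_in[of j "{s<..}"] by (simp add: tail_prob_def)

lemma prob_jump_le: "prob {\<omega> \<in> space M. a j \<omega> \<le> s} = 1 - tail_prob s"
proof -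
  have "{\<omega> \<in> space M. a j \<omega> \<le> s} = space M - {\<omega> \<in> space M. s < a j \<omega>}"
    by auto
  moreover have "{\<omega> \<in> space M. s < a j \<omega>} \<in> events"
    by measurable
  ultimately show ?thesis by (simp add: prob_compl prob_jump_gt)
qed

lemma tail_prob_le_one_minus_prob_1:
  assumes "1 \<le> s"
  shows "tail_prob s \<le> 1 - prob {\<omega> \<in> space M. a 0 \<omega> = 1}"
proof -
  have "{\<omega> \<in> space M. a 0 \<omega> = 1} \<subseteq> {\<omega> \<in> space M. a 0 \<omega> \<le> s}"
    using assms by auto
  then have "prob {\<omega> \<in> space M. a 0 \<omega> = 1} \<le> prob {\<omega> \<in> space M. a 0 \<omega> \<le> s}"
    by (rule finite_measure_mono) measurable
  then show ?thesis by (simp add: prob_jump_le)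
qed

lemma sum_tail_prob_le_expectation: "(\<Sum>i<K. tail_prob i) \<le> expectation (\<lambda>\<omega>. real (a 0 \<omega>))"
proof -
  let ?X = "\<lambda>i. indicator {\<omega> \<in> space M. i < a 0 \<omega>} :: 'a \<Rightarrow> real"
  have int_X: "integrable M (?X i)" for i
    by (intro integrable_real_indicator) (auto simp: emeasure_eq_measure)
  have "(\<Sum>i<K. tail_prob i) = (\<Sum>i<K. expectation (?X i))"
    by (simp add: tail_prob_def)
  also have "\<dots> = expectation (\<lambda>\<omega>. \<Sum>i<K. ?X i \<omega>)"
    using int_X by (rule Bochner_Integration.integral_sum[symmetric])
  also have "\<dots> \<le> expectation (\<lambda>\<omega>. real (a 0 \<omega>))"
  proof (rule integral_mono[OF _ integ])
    show "integrable M (\<lambda>\<omega>. \<Sum>i<K. ?X i \<omega>)"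
      using int_X by (rule Bochner_Integration.integrable_sum)
    fix \<omega> assume "\<omega> \<in> space M"
    moreover have "{..<K} \<inter> {i. i < a 0 \<omega>} = {..<min K (a 0 \<omega>)}"
      by auto
    ultimately have "(\<Sum>i<K. ?X i \<omega>) = real (min K (a 0 \<omega>))"
      by (simp add: indicator_def sum.If_cases)
    then show "(\<Sum>i<K. ?X i \<omega>) \<le> real (a 0 \<omega>)"
      by simp
  qed
  finally show ?thesis .
qed

lemma summable_tail_prob: "summable tail_prob"
  by (rule summableI_nonneg_bounded[OF tail_prob_nonneg sum_tail_prob_le_expectation])

definition no_overshoot_event :: "int set \<Rightarrow> int \<Rightarrow> 'a set" where
  "no_overshoot_event A c = {\<omega> \<in> space M. no_overshoot (\<lambda>j. a j \<omega>) A c}"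

lemma no_overshoot_event_in_events:
  "finite A \<Longrightarrow> no_overshoot_event A c \<in> events"
  unfolding no_overshoot_event_def no_overshoot_def by measurable

lemma no_overshoot_event_eq_INT:
  assumes "A \<noteq> {}" "A \<subseteq> {..<c}"
  shows "no_overshoot_event A c = (\<Inter>j\<in>A. a j -` {..nat (c - j)} \<inter> space M)"
  using assms by (auto simp: no_overshoot_event_def no_overshoot_def add_int_le_iff_le_nat)

lemma prob_no_overshoot_event:
  assumes "finite A" "A \<noteq> {}" "A \<subseteq> {..<c}"
  shows "prob (no_overshoot_event A c) = (\<Prod>j\<in>A. 1 - tail_prob (nat (c - j)))"
proof -
  have "prob (no_overshoot_event A c) = (\<Prod>j\<in>A. prob (a j -` {..nat (c - j)} \<inter> space M))"
    unfolding no_overshoot_event_eq_INT[OF assms(2,3)]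
    using assms(1,2) by (intro indep_varsD[OF indep]) auto
  also have "\<dots> = (\<Prod>j\<in>A. 1 - tail_prob (nat (c - j)))"
  proof (intro prod.cong refl)
    fix j
    have "a j -` {..nat (c - j)} \<inter> space M = {\<omega> \<in> space M. a j \<omega> \<le> nat (c - j)}"
      by auto
    then show "prob (a j -` {..nat (c - j)} \<inter> space M) = 1 - tail_prob (nat (c - j))"
      by (simp add: prob_jump_le)
  qed
  finally show ?thesis .
qed

lemma prob_no_overshoot_block:
  assumes "1 \<le> L"
  shows "prob (no_overshoot_event {c - int L..<c} c) = (\<Prod>i\<in>{1..L}. 1 - tail_prob i)"
proof -
  have "{c - int L..<c} \<noteq> {}" "{c - int L..<c} \<subseteq> {..<c}"
    using assms by auto
  then show ?thesis
    using prob_no_overshoot_event[of "{c - int L..<c}" c]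
      prod_reflect_int_interval[of "\<lambda>i. 1 - tail_prob i" c L]
    by simp
qed

lemma prob_no_overshoot_block_ge:
  assumes "N \<le> L" "1 \<le> L" "sum tail_prob {N<..L} \<le> 1/2"
  shows "prob {\<omega> \<in> space M. a 0 \<omega> = 1} ^ N / 2 \<le> prob (no_overshoot_event {c - int L..<c} c)"
proof -
  \<comment> \<open>The first N factors are at least P(a_0 = 1); the others multiply to at least 1/2.\<close>
  let ?p = "prob {\<omega> \<in> space M. a 0 \<omega> = 1}"
  have "?p ^ N = (\<Prod>i\<in>{1..N}. ?p)"
    by simp
  also have "\<dots> \<le> (\<Prod>i\<in>{1..N}. 1 - tail_prob i)"
  proof (rule prod_mono)
    fix i assume "i \<in> {1..N}"
    then show "0 \<le> ?p \<and> ?p \<le> 1 - tail_prob i"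
      using tail_prob_le_one_minus_prob_1[of i] by simp
  qed
  finally have head: "?p ^ N \<le> (\<Prod>i\<in>{1..N}. 1 - tail_prob i)" .
  have tail: "1/2 \<le> (\<Prod>i\<in>{N<..L}. 1 - tail_prob i)"
    using Weierstrass_prod_ineq[of "{N<..L}" tail_prob] tail_prob_nonneg tail_prob_le_1 assms(3)
    by force
  have "{1..L} = {1..N} \<union> {N<..L}"
    using assms(1) by auto
  then have "(\<Prod>i\<in>{1..L}. 1 - tail_prob i)
      = (\<Prod>i\<in>{1..N}. 1 - tail_prob i) * (\<Prod>i\<in>{N<..L}. 1 - tail_prob i)"
    by (simp only:) (rule prod.union_disjoint, auto)
  then have "prob (no_overshoot_event {c - int L..<c} c)
      = (\<Prod>i\<in>{1..N}. 1 - tail_prob i) * (\<Prod>i\<in>{N<..L}. 1 - tail_prob i)"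
    using prob_no_overshoot_block[OF assms(2)] by simp
  then show ?thesis
    using mult_mono[OF head tail] tail_prob_le_1 by (simp add: prod_nonneg)
qed

lemma prob_overshoot_le:
  assumes "finite A" "A \<subseteq> {..<c}"
  shows "prob (space M - no_overshoot_event A c) \<le> (\<Sum>j\<in>A. tail_prob (nat (c - j)))"
proof -
  have "space M - no_overshoot_event A c = (\<Union>j\<in>A. {\<omega> \<in> space M. nat (c - j) < a j \<omega>})"
    using assms(2) by (auto simp: no_overshoot_event_def no_overshoot_def add_int_le_iff_le_nat not_less)
  then have "prob (space M - no_overshoot_event A c)
      \<le> (\<Sum>j\<in>A. prob {\<omega> \<in> space M. nat (c - j) < a j \<omega>})"
    using assms(1) by (simp only:) (rule finite_measure_subadditive_finite, auto)
  then show ?thesis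
    by (simp add: prob_jump_gt)
qed

lemma prob_overshoot_below_block_le:
  assumes "x0 \<le> c - int L"
  shows "prob (space M - no_overshoot_event {x0..<c - int L} c) \<le> sum tail_prob {L<..nat (c - x0)}"
proof -
  have "{x0..<c - int L} \<subseteq> {..<c}"
    by auto
  then show ?thesis
    using prob_overshoot_le[of "{x0..<c - int L}" c] sum_reflect_int_interval[OF assms] by simp
qed

lemma prob_all_overshoot_eq_prod:
  assumes "disjoint_family_on B S" "finite S" "S \<noteq> {}" "\<And>k. k \<in> S \<Longrightarrow> finite (B k)"
  shows "prob (\<Inter>k\<in>S. space M - no_overshoot_event (B k) (c k))
    = (\<Prod>k\<in>S. 1 - prob (no_overshoot_event (B k) (c k)))"
proof -
  define Y where "Y k \<omega> = restrict (\<lambda>j. a j \<omega>) (B k)" for k \<omega>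
  have indep_Y: "indep_vars (\<lambda>k. PiM (B k) (\<lambda>_. count_space UNIV)) Y S"
    unfolding Y_def using assms(1) by (intro indep_vars_restrict[OF indep]) auto
  define Bad where "Bad k = space (PiM (B k) (\<lambda>_. count_space UNIV :: nat measure))
    - PiE (B k) (\<lambda>j. {n. j + int n \<le> c k})" for k
  have Bad_sets: "Bad k \<in> sets (PiM (B k) (\<lambda>_. count_space UNIV))" if "k \<in> S" for k
    unfolding Bad_def using assms(4)[OF that] by (intro sets.compl_sets sets_PiM_I_finite) auto
  have Y_Bad: "Y k -` Bad k \<inter> space M = space M - no_overshoot_event (B k) (c k)" for k
    by (auto simp: Y_def Bad_def no_overshoot_event_def no_overshoot_def space_PiM PiE_def Pi_def)
  have "prob (\<Inter>k\<in>S. Y k -` Bad k \<inter> space M) = (\<Prod>k\<in>S. prob (Y k -` Bad k \<inter> space M))"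
    using assms(2,3) Bad_sets by (intro indep_varsD[OF indep_Y]) auto
  then show ?thesis
    using assms(4) by (simp add: Y_Bad prob_compl no_overshoot_event_in_events cong: prod.cong)
qed

lemma prob_all_blocks_overshoot_le:
  assumes "N \<le> L" "1 \<le> L" "sum tail_prob {N<..L} \<le> 1/2" "1 \<le> K"
  shows "prob (\<Inter>k\<in>{1..K}. space M - no_overshoot_event
      {m + int k * int L - int L..<m + int k * int L} (m + int k * int L))
    \<le> (1 - prob {\<omega> \<in> space M. a 0 \<omega> = 1} ^ N / 2) ^ K"
proof -
  let ?q = "prob {\<omega> \<in> space M. a 0 \<omega> = 1} ^ N / 2"
  let ?E = "\<lambda>k::nat. no_overshoot_event
    {m + int k * int L - int L..<m + int k * int L} (m + int k * int L)"
  have "prob (\<Inter>k\<in>{1..K}. space M - ?E k) = (\<Prod>k\<in>{1..K}. 1 - prob (?E k))"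
    using assms(4) disjoint_family_on_consecutive_blocks
    by (intro prob_all_overshoot_eq_prod) auto
  also have "\<dots> \<le> (\<Prod>k\<in>{1..K}. 1 - ?q)"
    using prob_no_overshoot_block_ge[OF assms(1-3)] by (intro prod_mono) auto
  finally show ?thesis
    by simp
qed

lemma no_cut_point_subset:
  assumes "x0 \<le> m" "\<And>k. k \<in> S \<Longrightarrow> m \<le> e k - int L"
  shows "space M - {\<omega> \<in> space M. \<exists>c\<ge>m. no_overshoot (\<lambda>j. a j \<omega>) {x0..<c} c}
    \<subseteq> (\<Inter>k\<in>S. space M - no_overshoot_event {e k - int L..<e k} (e k))
      \<union> (\<Union>k\<in>S. space M - no_overshoot_event {x0..<e k - int L} (e k))"
proof
  fix \<omega>
  assume \<omega>: "\<omega> \<in> space M - {\<omega> \<in> space M. \<exists>c\<ge>m. no_overshoot (\<lambda>j. a j \<omega>) {x0..<c} c}"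
  show "\<omega> \<in> (\<Inter>k\<in>S. space M - no_overshoot_event {e k - int L..<e k} (e k))
      \<union> (\<Union>k\<in>S. space M - no_overshoot_event {x0..<e k - int L} (e k))"
  proof (rule ccontr)
    assume "\<not> ?thesis"
    then obtain k where "k \<in> S" "\<omega> \<in> no_overshoot_event {e k - int L..<e k} (e k)"
      "\<omega> \<in> no_overshoot_event {x0..<e k - int L} (e k)"
      using \<omega> by (auto split: if_split_asm)
    moreover have "x0 \<le> e k - int L" "m \<le> e k"
      using assms(1) assms(2)[OF \<open>k \<in> S\<close>] by auto
    ultimately have "no_overshoot (\<lambda>j. a j \<omega>) {x0..<e k} (e k)" "m \<le> e k"
      by (simp_all add: no_overshoot_split no_overshoot_event_def)
    then show False
      using \<omega> by auto
  qed
qed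

lemma prob_overshoot_below_blocks_le:
  fixes \<epsilon> :: real
  assumes "finite S" "\<And>k. k \<in> S \<Longrightarrow> x0 \<le> e k - int L" "\<And>l. sum tail_prob {L<..l} \<le> \<epsilon>"
  shows "prob (\<Union>k\<in>S. space M - no_overshoot_event {x0..<e k - int L} (e k)) \<le> card S * \<epsilon>"
proof -
  have "space M - no_overshoot_event {x0..<e k - int L} (e k) \<in> events" for k
    by (intro sets.compl_sets no_overshoot_event_in_events) simp
  then have "prob (\<Union>k\<in>S. space M - no_overshoot_event {x0..<e k - int L} (e k))
      \<le> (\<Sum>k\<in>S. prob (space M - no_overshoot_event {x0..<e k - int L} (e k)))"
    using assms(1) by (intro finite_measure_subadditive_finite) auto
  also have "\<dots> \<le> (\<Sum>k\<in>S. sum tail_prob {L<..nat (e k - x0)})"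
    using assms(2) by (intro sum_mono prob_overshoot_below_block_le) auto
  also have "\<dots> \<le> (\<Sum>k\<in>S. \<epsilon>)"
    using assms(3) by (intro sum_mono) auto
  finally show ?thesis
    by simp
qed

lemma prob_no_cut_point_above_le:
  fixes \<epsilon> :: real
  assumes "x0 \<le> m" "N \<le> L" "1 \<le> L" "sum tail_prob {N<..L} \<le> 1/2" "1 \<le> K"
    and "\<And>l. sum tail_prob {L<..l} \<le> \<epsilon>"
  shows "prob (space M - {\<omega> \<in> space M. \<exists>c\<ge>m. no_overshoot (\<lambda>j. a j \<omega>) {x0..<c} c})
    \<le> (1 - prob {\<omega> \<in> space M. a 0 \<omega> = 1} ^ N / 2) ^ K + K * \<epsilon>"
proof -
  define e where "e k = m + int k * int L" for k :: nat
  have e_ge: "m \<le> e k - int L" if "k \<in> {1..K}" for k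
    using that by (simp add: e_def mult_le_cancel_right1)
  then have x0_le: "x0 \<le> e k - int L" if "k \<in> {1..K}" for k
    using that assms(1) by force
  let ?blocks = "\<Inter>k\<in>{1..K}. space M - no_overshoot_event {e k - int L..<e k} (e k)"
  let ?below = "\<Union>k\<in>{1..K}. space M - no_overshoot_event {x0..<e k - int L} (e k)"
  have blocks_events: "?blocks \<in> events"
    using assms(5) by (intro sets.finite_INT sets.compl_sets no_overshoot_event_in_events) auto
  have below_events: "?below \<in> events"
    by (intro sets.finite_UN sets.compl_sets no_overshoot_event_in_events) auto
  have "prob (space M - {\<omega> \<in> space M. \<exists>c\<ge>m. no_overshoot (\<lambda>j. a j \<omega>) {x0..<c} c})
      \<le> prob (?blocks \<union> ?below)"
    using no_cut_point_subset[OF assms(1) e_ge] blocks_events below_events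
    by (intro finite_measure_mono sets.Un)
  also have "\<dots> \<le> prob ?blocks + prob ?below"
    by (rule measure_Un_le[OF blocks_events below_events])
  also have "prob ?blocks \<le> (1 - prob {\<omega> \<in> space M. a 0 \<omega> = 1} ^ N / 2) ^ K"
    unfolding e_def by (rule prob_all_blocks_overshoot_le[OF assms(2-5)])
  also have "prob ?below \<le> card {1..K} * \<epsilon>"
    using x0_le assms(6) by (intro prob_overshoot_below_blocks_le) auto
  finally show ?thesis
    by simp
qed

lemma prob_no_cut_point_above_less:
  assumes "x0 \<le> m" "0 < \<delta>"
  shows "prob (space M - {\<omega> \<in> space M. \<exists>c\<ge>m. no_overshoot (\<lambda>j. a j \<omega>) {x0..<c} c}) < \<delta>"
proof -
  let ?p = "prob {\<omega> \<in> space M. a 0 \<omega> = 1}"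
  obtain N where N: "\<And>n l. N \<le> n \<Longrightarrow> sum tail_prob {n<..l} < 1/2"
    using summable_tail_sums_small[OF summable_tail_prob, of "1/2"] by auto
  have "0 < ?p ^ N / 2" "?p ^ N / 2 \<le> 1/2"
    using one by (simp_all add: power_le_one)
  then have "(\<lambda>K. (1 - ?p ^ N / 2) ^ K) \<longlonglongrightarrow> 0"
    by (intro LIMSEQ_power_zero) auto
  then obtain K0 where "\<And>K. K0 \<le> K \<Longrightarrow> (1 - ?p ^ N / 2) ^ K < \<delta> / 2"
    using order_tendstoD(2)[of _ 0 sequentially "\<delta> / 2"] assms(2)
    by (auto simp: eventually_sequentially)
  then obtain K where K: "(1 - ?p ^ N / 2) ^ K < \<delta> / 2" "1 \<le> K"
    by (meson le_add2 le_add1)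
  obtain L0 where L0: "\<And>n l. L0 \<le> n \<Longrightarrow> sum tail_prob {n<..l} < \<delta> / (2 * K)"
    using summable_tail_sums_small[OF summable_tail_prob, of "\<delta> / (2 * K)"] assms(2) K(2)
    by auto
  define L where "L = max (max L0 N) 1"
  have "N \<le> L" "1 \<le> L" "L0 \<le> L"
    by (auto simp: L_def)
  then have "prob (space M - {\<omega> \<in> space M. \<exists>c\<ge>m. no_overshoot (\<lambda>j. a j \<omega>) {x0..<c} c})
      \<le> (1 - ?p ^ N / 2) ^ K + K * (\<delta> / (2 * K))"
    using N L0 K(2) by (intro prob_no_cut_point_above_le[OF assms(1)]) (auto intro: less_imp_le)
  then show ?thesis
    using K by simp
qed

lemma AE_cut_points:
  "AE \<omega> in M. \<forall>x0 m. x0 \<le> m \<longrightarrow> (\<exists>c\<ge>m. no_overshoot (\<lambda>j. a j \<omega>) {x0..<c} c)"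
proof -
  have "AE \<omega> in M. \<exists>c\<ge>m. no_overshoot (\<lambda>j. a j \<omega>) {x0..<c} c" if "x0 \<le> m" for x0 m
  proof -
    let ?N = "space M - {\<omega> \<in> space M. \<exists>c\<ge>m. no_overshoot (\<lambda>j. a j \<omega>) {x0..<c} c}"
    have N_events: "?N \<in> events"
      unfolding no_overshoot_def by measurable
    have "prob ?N \<le> 0"
    proof (rule field_le_epsilon)
      fix e :: real assume "0 < e"
      then show "prob ?N \<le> 0 + e"
        using prob_no_cut_point_above_less[OF that] by (simp add: less_imp_le)
    qed
    then have "emeasure M ?N = 0"
      using measure_nonneg[of M ?N] by (simp add: emeasure_eq_measure)
    then show ?thesis
      by (intro AE_I[OF _ _ N_events]) auto
  qed
  then show ?thesis
    by (simp add: AE_all_countable)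
qed

end

theorem mainTheorem7:
  fixes M :: "'a measure" and a :: "int \<Rightarrow> 'a \<Rightarrow> nat"
  assumes "prob_space M"
    and rv: "\<And>n. a n \<in> measurable M (count_space UNIV)"
    and indep: "prob_space.indep_vars M (\<lambda>_. count_space UNIV) a UNIV"
    and ident: "\<And>n. distr M (count_space UNIV) (a n) = distr M (count_space UNIV) (a 0)"
    and pos: "\<And>n. AE \<omega> in M. a n \<omega> \<ge> 1"
    and integ: "integrable M (\<lambda>\<omega>. real (a 0 \<omega>))"
    and one: "measure M {\<omega> \<in> space M. a 0 \<omega> = 1} > 0"
  shows "AE \<omega> in M. \<forall>n. comp_of (jump_map (\<lambda>k. a k \<omega>)) n = UNIV"
proof -
  interpret iid_jumps M a
    by (rule iid_jumps.intro[OF assms(1)], unfold_locales) (use rv indep ident integ one in auto)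
  have "AE \<omega> in M. \<forall>k. 1 \<le> a k \<omega>"
    using pos by (simp add: AE_all_countable)
  with AE_cut_points show ?thesis
  proof eventually_elim
    case (elim \<omega>)
    then show ?case
      by (intro allI comp_of_jump_map_eq_UNIV) auto
  qed
qed

end
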